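(* Let $d\ge1$ and let $P$ be a probability distribution on $\{0,1\}^d$ with $P(\nu)>0$ for all $\nu\in\{0,1\}^d$. Fix $\omega\in\{0,1\}^d$. The map $q\mapsto x=(x_1,\ldots,x_d)$ with $x_i:=\left(\frac{q_i}{1-q_i}\right)^{1-2\omega_i}$ is a bijection from $(0,1)^d$ onto $(0,\infty)^d$, and in terms of $x$, \[ f_\omega(q)=\prod_{i=1}^d(1+x_i). \] Moreover, for $q\in(0,1)^d$: $q\in\mathcal{Q}_\omega$ if and only if for every $\nu\in\{0,1\}^d$, \[ \prod_{i:\,\nu_i\ne\omega_i}x_i\le\frac{P(\nu)}{P(\omega)}, \] where the empty product (when $\nu=\omega$) equals $1$.
   Context: For $\omega\in\{0,1\}^d$ and $q\in[0,1]^d$, $f_\omega(q):=\prod_{i=1}^d q_i^{-\omega_i}(1-q_i)^{\omega_i-1}\in\mathbb{R}\cup\{+\infty\}$ (with $0^0=1$, $1/0=+\infty$), and $\mathcal{Q}_\omega:=\{q\in[0,1]^d\mid \forall\nu\in\{0,1\}^d:\ P(\omega)f_\omega(q)\le P(\nu)f_\nu(q)\}$. *)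

theory Defs
  imports "HOL-Analysis.Analysis"
begin

text \<open>Points of {0,1}^d are functions 'd => bool (True = 1), with 'd a finite index type of
  cardinality d. Points of [0,1]^d are functions 'd => real.\<close>

text \<open>f_omega(q) = prod_i q_i^(-omega_i) (1-q_i)^(omega_i - 1), valued in extended reals,
  with 0^0 = 1 and 1/0 = +infinity.\<close>
definition f_omega :: "('d::finite \<Rightarrow> bool) \<Rightarrow> ('d \<Rightarrow> real) \<Rightarrow> ereal" where
  "f_omega \<omega> q = (\<Prod>i\<in>UNIV. inverse (ereal (q i)) ^ (of_bool (\<omega> i))
                                 * inverse (ereal (1 - q i)) ^ (1 - of_bool (\<omega> i)))"

definition Q_omega :: "(('d::finite \<Rightarrow> bool) \<Rightarrow> real) \<Rightarrow> ('d \<Rightarrow> bool) \<Rightarrow> ('d \<Rightarrow> real) set" where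
  "Q_omega P \<omega> = {q. (\<forall>i. 0 \<le> q i \<and> q i \<le> 1) \<and>
      (\<forall>\<nu>. ereal (P \<omega>) * f_omega \<omega> q \<le> ereal (P \<nu>) * f_omega \<nu> q)}"

definition xmap :: "('d::finite \<Rightarrow> bool) \<Rightarrow> ('d \<Rightarrow> real) \<Rightarrow> ('d \<Rightarrow> real)" where
  "xmap \<omega> q = (\<lambda>i. (q i / (1 - q i)) powr (1 - 2 * of_bool (\<omega> i)))"

end

theory Submission
  imports Defs
begin

text \<open>On the open cube, x_i is the odds of q_i in favour of the value opposite to omega_i, and
  the i-th factor of f_nu(q) is 1 + x_i if nu_i = omega_i and (1 + x_i) / x_i otherwise. Hence
  f_nu(q) = f_omega(q) / (product of x_i over nu_i \<noteq> omega_i), and dividing the defining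
  inequalities of Q_omega by the positive number f_omega(q) gives the characterisation.\<close>

lemma xmap_eq:
  assumes "0 < q i" "q i < 1"
  shows "xmap \<omega> q i = (if \<omega> i then (1 - q i) / q i else q i / (1 - q i))"
  using assms by (simp add: xmap_def powr_neg_one)

lemma xmap_pos: "0 < q i \<Longrightarrow> q i < 1 \<Longrightarrow> 0 < xmap \<omega> q i"
  by (simp add: xmap_eq)

lemma bij_betw_xmap:
  "bij_betw (xmap \<omega>) {q. \<forall>i. 0 < q i \<and> q i < 1} {x. \<forall>i. 0 < x i}"
proof (rule bij_betw_byWitness)
  let ?inv = "\<lambda>(x :: 'a \<Rightarrow> real) i. if \<omega> i then 1 / (1 + x i) else x i / (1 + x i)"
  show "\<forall>q\<in>{q. \<forall>i. 0 < q i \<and> q i < 1}. ?inv (xmap \<omega> q) = q"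
  proof (intro ballI ext)
    fix q :: "'a \<Rightarrow> real" and i
    assume "q \<in> {q. \<forall>i. 0 < q i \<and> q i < 1}"
    then have "0 < q i" "q i < 1" by auto
    then show "?inv (xmap \<omega> q) i = q i"
      by (simp add: xmap_eq field_simps)
  qed
  have inv_bounds: "0 < ?inv x i \<and> ?inv x i < 1" if "0 < x i" for x i
  proof -
    from that have "0 < 1 + x i" by simp
    with that show ?thesis by (simp add: field_simps)
  qed
  show "\<forall>x\<in>{x. \<forall>i. 0 < x i}. xmap \<omega> (?inv x) = x"
  proof (intro ballI ext)
    fix x :: "'a \<Rightarrow> real" and i
    assume "x \<in> {x. \<forall>i. 0 < x i}"
    then have "0 < x i" by simp
    moreover from this have "0 < 1 + x i" by simp
    ultimately show "xmap \<omega> (?inv x) i = x i"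
      using inv_bounds[of x i]
      by (simp only: xmap_eq) (simp add: field_simps)
  qed
  show "xmap \<omega> ` {q. \<forall>i. 0 < q i \<and> q i < 1} \<subseteq> {x. \<forall>i. 0 < x i}"
    by (auto intro: xmap_pos)
  show "?inv ` {x. \<forall>i. 0 < x i} \<subseteq> {q. \<forall>i. 0 < q i \<and> q i < 1}"
    using inv_bounds by auto
qed

lemma f_omega_eq_prod:
  assumes "\<forall>i. 0 < q i \<and> q i < 1"
  shows "f_omega \<nu> q = ereal (\<Prod>i\<in>UNIV. if \<nu> i then 1 / q i else 1 / (1 - q i))"
proof -
  have "inverse (ereal (q i)) ^ of_bool (\<nu> i) * inverse (ereal (1 - q i)) ^ (1 - of_bool (\<nu> i))
          = ereal (if \<nu> i then 1 / q i else 1 / (1 - q i))" for i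
    using assms[rule_format, of i] by (cases "\<nu> i") (auto simp: divide_inverse)
  then show ?thesis
    unfolding f_omega_def by (simp add: prod_ereal)
qed

lemma f_omega_factor_eq_xmap:
  assumes "0 < q i" "q i < 1"
  shows "(if \<nu> i then 1 / q i else 1 / (1 - q i))
           = (1 + xmap \<omega> q i) / (if \<nu> i \<noteq> \<omega> i then xmap \<omega> q i else 1)"
  using assms by (cases "\<nu> i"; cases "\<omega> i") (auto simp: xmap_eq field_simps)

lemma f_omega_eq_prod_xmap:
  assumes "\<forall>i. 0 < q i \<and> q i < 1"
  shows "f_omega \<nu> q
           = ereal ((\<Prod>i\<in>UNIV. 1 + xmap \<omega> q i) / (\<Prod>i\<in>{i. \<nu> i \<noteq> \<omega> i}. xmap \<omega> q i))"
proof -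
  have "(\<Prod>i\<in>UNIV. if \<nu> i then 1 / q i else 1 / (1 - q i))
          = (\<Prod>i\<in>UNIV. (1 + xmap \<omega> q i) / (if \<nu> i \<noteq> \<omega> i then xmap \<omega> q i else 1))"
    using assms by (intro prod.cong) (auto simp only: f_omega_factor_eq_xmap)
  also have "\<dots> = (\<Prod>i\<in>UNIV. 1 + xmap \<omega> q i) / (\<Prod>i\<in>{i. \<nu> i \<noteq> \<omega> i}. xmap \<omega> q i)"
    by (simp add: prod_dividef prod.If_cases Int_def)
  finally show ?thesis
    using assms by (simp add: f_omega_eq_prod)
qed

lemma f_omega_eq_prod_one_plus_xmap:
  "\<forall>i. 0 < q i \<and> q i < 1 \<Longrightarrow> f_omega \<omega> q = ereal (\<Prod>i\<in>UNIV. 1 + xmap \<omega> q i)"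
  by (simp add: f_omega_eq_prod_xmap[where \<omega> = \<omega>])

lemma Q_omega_iff_prod_xmap_le:
  assumes "0 < P \<omega>" and q: "\<forall>i. 0 < q i \<and> q i < 1"
  shows "q \<in> Q_omega P \<omega> \<longleftrightarrow> (\<forall>\<nu>. (\<Prod>i\<in>{i. \<nu> i \<noteq> \<omega> i}. xmap \<omega> q i) \<le> P \<nu> / P \<omega>)"
proof -
  define F where "F = (\<Prod>i\<in>UNIV. 1 + xmap \<omega> q i)"
  define X where "X \<nu> = (\<Prod>i\<in>{i. \<nu> i \<noteq> \<omega> i}. xmap \<omega> q i)" for \<nu> :: "'a \<Rightarrow> bool"
  have "0 < F"
    unfolding F_def using q by (auto intro!: prod_pos simp: add_pos_pos xmap_pos)
  have "0 < X \<nu>" for \<nu>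
    unfolding X_def using q by (auto intro!: prod_pos xmap_pos)
  have "P \<omega> * F \<le> P \<nu> * (F / X \<nu>) \<longleftrightarrow> X \<nu> \<le> P \<nu> / P \<omega>" for \<nu>
    using \<open>0 < F\<close> \<open>0 < X \<nu>\<close> \<open>0 < P \<omega>\<close> by (simp add: field_simps)
  moreover have "f_omega \<nu> q = ereal (F / X \<nu>)" for \<nu>
    unfolding F_def X_def using q by (rule f_omega_eq_prod_xmap)
  ultimately show ?thesis
    using q by (auto simp: Q_omega_def X_def less_imp_le)
qed

theorem lemma3:
  fixes P :: "('d::finite \<Rightarrow> bool) \<Rightarrow> real" and \<omega> :: "'d \<Rightarrow> bool"
  assumes Ppos: "\<forall>\<nu>. P \<nu> > 0"
    and Psum: "(\<Sum>\<nu>\<in>UNIV. P \<nu>) = 1"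
  shows "bij_betw (xmap \<omega>) {q. \<forall>i. 0 < q i \<and> q i < 1} {x. \<forall>i. 0 < x i} \<and>
         (\<forall>q. (\<forall>i. 0 < q i \<and> q i < 1) \<longrightarrow>
            f_omega \<omega> q = ereal (\<Prod>i\<in>UNIV. 1 + xmap \<omega> q i)) \<and>
         (\<forall>q. (\<forall>i. 0 < q i \<and> q i < 1) \<longrightarrow>
            (q \<in> Q_omega P \<omega> \<longleftrightarrow>
              (\<forall>\<nu>. (\<Prod>i\<in>{i. \<nu> i \<noteq> \<omega> i}. xmap \<omega> q i) \<le> P \<nu> / P \<omega>)))"
  using bij_betw_xmap f_omega_eq_prod_one_plus_xmap Q_omega_iff_prod_xmap_le Ppos by blast

end
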